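(* $Cond_{AB}$ is not universal: there is an epistemic space $\mathbb{S}$ that is identifiable in the limit but is not identifiable in the limit by $Cond_{AB}$.
   Context: An epistemic space is a pair $\mathbb{S}=(S,\mathcal{O})$ where $S$ is a non-empty, at most countable set of worlds and $\mathcal{O}\subseteq\mathcal{P}(S)$ is a set of observables. A data stream is an infinite sequence $\vec O=(O_0,O_1,\ldots)$ of elements of $\mathcal{O}$; $\vec O[n]=(O_0,\ldots,O_{n-1})$; it is sound for $s$ if $s\in O_n$ for all $n$ and complete for $s$ if every $O\in\mathcal{O}$ with $s\in O$ occurs in it. $\mathbb{S}$ is identifiable in the limit if some learner (map from finite sequences to subsets of $S$) outputs $\{s\}$ on all sufficiently long initial segments of every stream sound and complete for $s$, for every $s\in S$. A plausibility space is $\mathbb{B}=(S,\mathcal{O},\preceq)$, $\preceq$ a total preorder on $S$; $\min_\preceq X$ is the set of $\preceq$-minimal elements of $X$. Conditioning: $Cond_1(\mathbb{B},p)=(S\cap p,\mathcal{O},\preceq\cap((S\cap p)\times(S\cap p)))$. Anchored conditioning: if $Cond_1(\mathbb{B},p)=(S',\mathcal{O},\preceq')$, then $Cond^+_1(\mathbb{B},p)=(S',\mathcal{O},\preceq')$ if $|\min_{\preceq'}S'|=1$, and otherwise $Cond^+_1(\mathbb{B},p)=(\{x\},\mathcal{O},\emptyset)$ for some (randomly chosen) $x\in\min_{\preceq'}S'$. The anchoring-biased method: $Cond_{AB}(\mathbb{B},\lambda)=\mathbb{B}$ and $Cond_{AB}(\mathbb{B},\sigma\cdot p)=Cond^+_1(Cond_{AB}(\mathbb{B},\sigma),\min_{\preceq_{AB}}(S_{AB}\cap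 p))$, where $Cond_{AB}(\mathbb{B},\sigma)=(S_{AB},\mathcal{O},\preceq_{AB})$. Its conjecture on $\sigma$ is the set of minimal worlds of $Cond_{AB}((S,\mathcal{O},\preceq),\sigma)$ (for a one-world space $\{x\}$ this is $\{x\}$). $\mathbb{S}$ is identifiable in the limit by $Cond_{AB}$ if there is a total preorder $\preceq$ on $S$ such that for every $s\in S$, every stream sound and complete for $s$, and every resolution of the random choices, the conjecture on $\vec O[n]$ is $\{s\}$ for all sufficiently large $n$. *)

theory Defs
  imports Main "HOL-Library.Countable_Set"
begin

text \<open>Worlds are natural numbers (any non-empty, at most countable set of worlds
  is isomorphic to a subset of nat). Observables are sets of worlds.\<close>

definition epistemic_space :: "nat set \<Rightarrow> nat set set \<Rightarrow> bool" where
  "epistemic_space S Obs \<longleftrightarrow> S \<noteq> {} \<and> countable S \<and> Obs \<subseteq> Pow S"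

definition data_stream :: "nat set set \<Rightarrow> (nat \<Rightarrow> nat set) \<Rightarrow> bool" where
  "data_stream Obs f \<longleftrightarrow> (\<forall>n. f n \<in> Obs)"

definition sound_for :: "(nat \<Rightarrow> nat set) \<Rightarrow> nat \<Rightarrow> bool" where
  "sound_for f s \<longleftrightarrow> (\<forall>n. s \<in> f n)"

definition complete_for :: "nat set set \<Rightarrow> (nat \<Rightarrow> nat set) \<Rightarrow> nat \<Rightarrow> bool" where
  "complete_for Obs f s \<longleftrightarrow> (\<forall>Q\<in>Obs. s \<in> Q \<longrightarrow> (\<exists>n. f n = Q))"

definition prefix_of :: "(nat \<Rightarrow> nat set) \<Rightarrow> nat \<Rightarrow> nat set list" where
  "prefix_of f n = map f [0..<n]"

definition identifiable :: "nat set \<Rightarrow> nat set set \<Rightarrow> bool" where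
  "identifiable S Obs \<longleftrightarrow>
     (\<exists>L :: nat set list \<Rightarrow> nat set. \<forall>s\<in>S. \<forall>f.
        data_stream Obs f \<and> sound_for f s \<and> complete_for Obs f s \<longrightarrow>
        (\<exists>N. \<forall>n\<ge>N. L (prefix_of f n) = {s}))"

text \<open>Total preorder on S (relation \<open>(x,y) \<in> R\<close> means \<open>x \<preceq> y\<close>).\<close>
definition total_preorder_on :: "nat set \<Rightarrow> (nat \<times> nat) set \<Rightarrow> bool" where
  "total_preorder_on S R \<longleftrightarrow> R \<subseteq> S \<times> S \<and> refl_on S R \<and> trans R \<and> total_on S R"

definition minR :: "(nat \<times> nat) set \<Rightarrow> nat set \<Rightarrow> nat set" where
  "minR R X = {x\<in>X. \<forall>y\<in>X. (y, x) \<in> R \<longrightarrow> (x, y) \<in> R}"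

text \<open>Plausibility states (S, \<preceq>); the observable set is never changed, so it is omitted.\<close>
type_synonym pstate = "nat set \<times> (nat \<times> nat) set"

definition cond1 :: "pstate \<Rightarrow> nat set \<Rightarrow> pstate" where
  "cond1 B p = (fst B \<inter> p, snd B \<inter> ((fst B \<inter> p) \<times> (fst B \<inter> p)))"

text \<open>Anchored conditioning; the random choice is resolved by the function c,
  which receives the set of minimal worlds. If that set is empty (no choice possible),
  the conditioned (empty) space is kept.\<close>
definition cond_plus :: "(nat set \<Rightarrow> nat) \<Rightarrow> pstate \<Rightarrow> nat set \<Rightarrow> pstate" where
  "cond_plus c B p =
     (let B' = cond1 B p; M = minR (snd B') (fst B')
      in if card M = 1 \<or> M = {} then B' else ({c M}, {}))"

text \<open>Anchoring-biased method, defined on the reversed sequence. The resolution of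
  the random choices is a function ch taking the history so far and the set of candidates.\<close>
fun condAB_rev :: "(nat set list \<Rightarrow> nat set \<Rightarrow> nat) \<Rightarrow> pstate \<Rightarrow> nat set list \<Rightarrow> pstate" where
  "condAB_rev ch B [] = B"
| "condAB_rev ch B (p # rs) =
     (let St = condAB_rev ch B rs
      in cond_plus (ch (rev rs)) St (minR (snd St) (fst St \<inter> p)))"

definition condAB :: "(nat set list \<Rightarrow> nat set \<Rightarrow> nat) \<Rightarrow> pstate \<Rightarrow> nat set list \<Rightarrow> pstate" where
  "condAB ch B \<sigma> = condAB_rev ch B (rev \<sigma>)"

definition conjAB :: "(nat set list \<Rightarrow> nat set \<Rightarrow> nat) \<Rightarrow> pstate \<Rightarrow> nat set list \<Rightarrow> nat set" where
  "conjAB ch B \<sigma> = (let St = condAB ch B \<sigma> in minR (snd St) (fst St))"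

definition valid_choice :: "(nat set list \<Rightarrow> nat set \<Rightarrow> nat) \<Rightarrow> bool" where
  "valid_choice ch \<longleftrightarrow> (\<forall>\<sigma> M. M \<noteq> {} \<longrightarrow> ch \<sigma> M \<in> M)"

definition identifiable_AB :: "nat set \<Rightarrow> nat set set \<Rightarrow> bool" where
  "identifiable_AB S Obs \<longleftrightarrow>
     (\<exists>R. total_preorder_on S R \<and>
        (\<forall>s\<in>S. \<forall>f. data_stream Obs f \<and> sound_for f s \<and> complete_for Obs f s \<longrightarrow>
           (\<forall>ch. valid_choice ch \<longrightarrow>
              (\<exists>N. \<forall>n\<ge>N. conjAB ch (S, R) (prefix_of f n) = {s}))))"

end

theory Submission
  imports Defs
begin

text \<open>Take two worlds 0 and 1 and the observables {0,1} and {1}. A learner identifies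
  this space by guessing 1 exactly when {1} has been observed. Anchored conditioning
  on the minimal worlds compatible with an observation leaves at most one world, and
  later steps only shrink the set of worlds. So the first observation, {0,1} for both
  worlds, already fixes the only world the method can ever conjecture, and it cannot
  be both 0 and 1.\<close>

lemma fst_condAB_rev_Cons_subset:
  assumes "valid_choice ch"
  shows "fst (condAB_rev ch B (p # rs)) \<subseteq> fst (condAB_rev ch B rs)"
proof -
  let ?St = "condAB_rev ch B rs"
  let ?B' = "cond1 ?St (minR (snd ?St) (fst ?St \<inter> p))"
  let ?M = "minR (snd ?B') (fst ?B')"
  have "fst ?B' \<subseteq> fst ?St" by (simp add: cond1_def)
  moreover have "?M \<subseteq> fst ?B'" by (auto simp: minR_def)
  moreover have "ch (rev rs) ?M \<in> ?M" if "?M \<noteq> {}"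
    using assms that by (simp add: valid_choice_def)
  ultimately show ?thesis by (auto simp: cond_plus_def Let_def)
qed

lemma fst_condAB_rev_append_subset:
  assumes "valid_choice ch"
  shows "fst (condAB_rev ch B (xs @ ys)) \<subseteq> fst (condAB_rev ch B ys)"
proof (induction xs)
  case Nil
  then show ?case by simp
next
  case (Cons x xs)
  then show ?case using fst_condAB_rev_Cons_subset[OF assms, of B x "xs @ ys"] by simp
qed

lemma conjAB_Cons_subset:
  assumes "valid_choice ch"
  shows "conjAB ch B (p # \<sigma>) \<subseteq> fst (condAB ch B [p])"
proof -
  have "conjAB ch B (p # \<sigma>) \<subseteq> fst (condAB ch B (p # \<sigma>))"
    by (auto simp: conjAB_def Let_def minR_def)
  also have "\<dots> \<subseteq> fst (condAB ch B [p])"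
    using fst_condAB_rev_append_subset[OF assms, of B "rev \<sigma>" "[p]"] by (simp add: condAB_def)
  finally show ?thesis .
qed

text \<open>The worlds minimal among those compatible with \<open>p\<close> are pairwise equally
  plausible, so all of them stay minimal after conditioning on them.\<close>

lemma cond_plus_minR_at_most_one:
  assumes "x \<in> fst (cond_plus c St (minR (snd St) (fst St \<inter> p)))"
    and "y \<in> fst (cond_plus c St (minR (snd St) (fst St \<inter> p)))"
  shows "x = y"
proof -
  let ?B' = "cond1 St (minR (snd St) (fst St \<inter> p))"
  let ?M = "minR (snd ?B') (fst ?B')"
  have all_minimal: "fst ?B' \<subseteq> ?M" by (auto simp: cond1_def minR_def)
  show ?thesis
  proof (cases "card ?M = 1 \<or> ?M = {}")
    case True
    then have "x \<in> ?M" "y \<in> ?M"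
      using assms all_minimal by (auto simp: cond_plus_def Let_def)
    then show ?thesis using True by (metis card_1_singletonE empty_iff singletonD)
  next
    case False
    then show ?thesis using assms by (simp add: cond_plus_def Let_def)
  qed
qed

lemma condAB_single_at_most_one:
  assumes "x \<in> fst (condAB ch B [p])" and "y \<in> fst (condAB ch B [p])"
  shows "x = y"
  using assms cond_plus_minR_at_most_one[of x "ch []" B p y] by (simp add: condAB_def)

lemma prefix_of_Suc_Cons: "prefix_of f (Suc n) = f 0 # prefix_of (\<lambda>k. f (Suc k)) n"
  by (simp add: prefix_of_def upt_conv_Cons map_Suc_upt[symmetric] del: upt_Suc)

lemma not_identifiable_AB_if_same_first_observation:
  assumes "s \<in> S" "t \<in> S" "s \<noteq> t"
    and "data_stream Obs f" "sound_for f s" "complete_for Obs f s"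
    and "data_stream Obs g" "sound_for g t" "complete_for Obs g t"
    and "f 0 = g 0"
  shows "\<not> identifiable_AB S Obs"
proof
  assume "identifiable_AB S Obs"
  then obtain R where R: "\<forall>s\<in>S. \<forall>f. data_stream Obs f \<and> sound_for f s \<and> complete_for Obs f s \<longrightarrow>
      (\<forall>ch. valid_choice ch \<longrightarrow> (\<exists>N. \<forall>n\<ge>N. conjAB ch (S, R) (prefix_of f n) = {s}))"
    unfolding identifiable_AB_def by blast
  define ch :: "nat set list \<Rightarrow> nat set \<Rightarrow> nat" where "ch = (\<lambda>_ M. SOME x. x \<in> M)"
  have ch: "valid_choice ch" unfolding valid_choice_def ch_def by (auto intro: someI_ex)
  obtain Nf where Nf: "\<forall>n\<ge>Nf. conjAB ch (S, R) (prefix_of f n) = {s}"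
    using R assms ch by blast
  obtain Ng where Ng: "\<forall>n\<ge>Ng. conjAB ch (S, R) (prefix_of g n) = {t}"
    using R assms ch by blast
  let ?n = "Suc (Nf + Ng)"
  have "s \<in> fst (condAB ch (S, R) [f 0])"
    using Nf conjAB_Cons_subset[OF ch, of "(S, R)" "f 0"]
    by (metis prefix_of_Suc_Cons insert_subset le_add1 le_SucI)
  moreover have "t \<in> fst (condAB ch (S, R) [f 0])"
    using Ng conjAB_Cons_subset[OF ch, of "(S, R)" "g 0"] \<open>f 0 = g 0\<close>
    by (metis prefix_of_Suc_Cons insert_subset le_add2 le_SucI)
  ultimately show False using \<open>s \<noteq> t\<close> condAB_single_at_most_one by blast
qed

lemma identifiable_zero_one: "identifiable {0, 1} {{0, 1}, {1}}"
  unfolding identifiable_def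
proof (intro exI[of _ "\<lambda>\<sigma>. if {1} \<in> set \<sigma> then {1} else {0}"] ballI allI impI)
  fix s f
  assume s: "s \<in> {0, 1::nat}"
    and f: "data_stream {{0, 1}, {1}} f \<and> sound_for f s \<and> complete_for {{0, 1}, {1}} f s"
  show "\<exists>N. \<forall>n\<ge>N. (if {1} \<in> set (prefix_of f n) then {1} else {0}) = {s}"
  proof (cases "s = 0")
    case True
    have "f n = {0, 1}" for n
    proof -
      have "f n \<in> {{0, 1}, {1}}" "0 \<in> f n"
        using f True by (auto simp: data_stream_def sound_for_def)
      then show ?thesis by (metis empty_iff insert_iff zero_neq_one)
    qed
    then show ?thesis using True by (auto simp: prefix_of_def)
  next
    case False
    then have "s = 1" using s by simp
    then obtain k where "f k = {1}" using f by (auto simp: complete_for_def)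
    have "{1} \<in> set (prefix_of f n)" if "n > k" for n
    proof -
      have "f k \<in> set (prefix_of f n)" using that by (simp add: prefix_of_def)
      then show ?thesis using \<open>f k = {1}\<close> by simp
    qed
    then show ?thesis using \<open>s = 1\<close> by (intro exI[of _ "Suc k"]) auto
  qed
qed

lemma not_identifiable_AB_zero_one: "\<not> identifiable_AB {0, 1} {{0, 1}, {1}}"
proof (rule not_identifiable_AB_if_same_first_observation)
  show "data_stream {{0, 1}, {1}} (\<lambda>_. {0, 1})" "sound_for (\<lambda>_. {0, 1}) 0"
    "complete_for {{0, 1}, {1}} (\<lambda>_. {0, 1}) 0"
    by (auto simp: data_stream_def sound_for_def complete_for_def)
  show "data_stream {{0, 1}, {1}} (\<lambda>n. if n = 0 then {0, 1} else {1})"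
    "sound_for (\<lambda>n. if n = 0 then {0, 1} else {1}) 1"
    "complete_for {{0, 1}, {1}} (\<lambda>n. if n = 0 then {0, 1} else {1}) 1"
    by (auto simp: data_stream_def sound_for_def complete_for_def intro: exI[of _ 0] exI[of _ 1])
qed auto

theorem mainTheorem6:
  shows "\<exists>S Obs. epistemic_space S Obs \<and> identifiable S Obs \<and> \<not> identifiable_AB S Obs"
proof (intro exI conjI)
  show "epistemic_space {0, 1} {{0, 1}, {1}}" by (auto simp: epistemic_space_def)
  show "identifiable {0, 1} {{0, 1}, {1}}" by (rule identifiable_zero_one)
  show "\<not> identifiable_AB {0, 1} {{0, 1}, {1}}" by (rule not_identifiable_AB_zero_one)
qed

end
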